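(* Let $P$ be the transition matrix of an irreducible, reversible and transitive Markov chain on a finite state space $\Omega$. Let $\lambda_Y,\lambda_Z\ge0$ and let $X,Y,Z$ be independent continuous-time Markov chains with transition matrix $P$ and speeds $\lambda_X=1$, $\lambda_Y$, $\lambda_Z$ respectively. Let $\tau^X_z=\inf\{t\ge0:X_t=z\}$ and $M^{Y,Z}=\inf\{t\ge0:Y_t=Z_t\}$. Then for all $(x,z)\in\Omega^2$ the distribution of $\tau^X_z/(\lambda_Y+\lambda_Z)$ when $X_0=x$ equals the distribution of $M^{Y,Z}$ when $(Y_0,Z_0)=(x,z)$; that is, for all $t\ge0$, \[\mathbb P_x\big(\tau^X_z\le(\lambda_Y+\lambda_Z)t\big)=\mathbb P_{(x,z)}\big(M^{Y,Z}\le t\big).\]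
   Context: A continuous-time chain with speed $\lambda$ and transition matrix $P$ jumps at rate $\lambda$ according to $P$ (generator $\lambda(P-I)$). An automorphism of $P$ is a bijection $\phi:\Omega\to\Omega$ with $P(z,w)=P(\phi(z),\phi(w))$ for all $z,w$; $P$ is transitive if for all $x,y$ there is an automorphism $\phi$ with $\phi(x)=y$. $\mathbb P_x$ refers to $X_0=x$ and $\mathbb P_{(x,z)}$ to $(Y_0,Z_0)=(x,z)$. *)

theory Defs
  imports "HOL-Probability.Probability"
begin

definition stochastic_matrix :: "('a::finite \<Rightarrow> 'a \<Rightarrow> real) \<Rightarrow> bool" where
  "stochastic_matrix P \<longleftrightarrow> (\<forall>x y. P x y \<ge> 0) \<and> (\<forall>x. (\<Sum>y\<in>UNIV. P x y) = 1)"

fun matpow :: "('a::finite \<Rightarrow> 'a \<Rightarrow> real) \<Rightarrow> nat \<Rightarrow> 'a \<Rightarrow> 'a \<Rightarrow> real" where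
  "matpow P 0 = (\<lambda>x y. if x = y then 1 else 0)"
| "matpow P (Suc n) = (\<lambda>x y. \<Sum>w\<in>UNIV. matpow P n x w * P w y)"

definition irreducible_chain :: "('a::finite \<Rightarrow> 'a \<Rightarrow> real) \<Rightarrow> bool" where
  "irreducible_chain P \<longleftrightarrow> (\<forall>x y. \<exists>n. matpow P n x y > 0)"

definition reversible_chain :: "('a::finite \<Rightarrow> 'a \<Rightarrow> real) \<Rightarrow> bool" where
  "reversible_chain P \<longleftrightarrow> (\<exists>\<pi>. (\<forall>x. \<pi> x > 0) \<and> (\<Sum>x\<in>UNIV. \<pi> x) = 1 \<and>
      (\<forall>x y. \<pi> x * P x y = \<pi> y * P y x))"

definition automorphism :: "('a \<Rightarrow> 'a \<Rightarrow> real) \<Rightarrow> ('a \<Rightarrow> 'a) \<Rightarrow> bool" where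
  "automorphism P \<phi> \<longleftrightarrow> bij \<phi> \<and> (\<forall>z w. P z w = P (\<phi> z) (\<phi> w))"

definition transitive_chain :: "('a \<Rightarrow> 'a \<Rightarrow> real) \<Rightarrow> bool" where
  "transitive_chain P \<longleftrightarrow> (\<forall>x y. \<exists>\<phi>. automorphism P \<phi> \<and> \<phi> x = y)"

text \<open>Transition function of the continuous-time chain with speed lam and transition matrix P,
  i.e. exp(t lam (P - I)) = exp(-lam t) * sum_n (lam t)^n/n! P^n.\<close>
definition heat_kernel :: "real \<Rightarrow> ('a::finite \<Rightarrow> 'a \<Rightarrow> real) \<Rightarrow> real \<Rightarrow> 'a \<Rightarrow> 'a \<Rightarrow> real" where
  "heat_kernel lam P t x y = exp (- lam * t) * (\<Sum>n. (lam * t) ^ n / fact n * matpow P n x y)"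

text \<open>X is a continuous-time Markov chain on the probability space M, with speed lam,
  transition matrix P, started at x0: coordinates are random variables, paths are
  right-continuous (state space discrete), and the finite-dimensional distributions
  are those of the chain with generator lam (P - I).\<close>
definition ctmc :: "'w measure \<Rightarrow> ('w \<Rightarrow> real \<Rightarrow> 'a::finite) \<Rightarrow> real \<Rightarrow> ('a \<Rightarrow> 'a \<Rightarrow> real) \<Rightarrow> 'a \<Rightarrow> bool" where
  "ctmc M X lam P x0 \<longleftrightarrow>
     prob_space M \<and>
     (\<forall>t. (\<lambda>\<omega>. X \<omega> t) \<in> measurable M (count_space UNIV)) \<and>
     (\<forall>\<omega>\<in>space M. \<forall>t\<ge>0. eventually (\<lambda>s. X \<omega> s = X \<omega> t) (at_right t)) \<and>
     (\<forall>(n::nat) (tt::nat \<Rightarrow> real) (s::nat \<Rightarrow> 'a).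
        tt 0 = 0 \<and> (\<forall>i<n. tt i \<le> tt (Suc i)) \<longrightarrow>
        measure M {\<omega>\<in>space M. \<forall>i\<le>n. X \<omega> (tt i) = s i}
          = (if s 0 = x0 then 1 else 0) *
            (\<Prod>i<n. heat_kernel lam P (tt (Suc i) - tt i) (s i) (s (Suc i))))"

text \<open>Hitting time of z (infimum over [0,oo), value oo if never hit).\<close>
definition hitting_time :: "('w \<Rightarrow> real \<Rightarrow> 'a) \<Rightarrow> 'a \<Rightarrow> 'w \<Rightarrow> ereal" where
  "hitting_time X z \<omega> = Inf (ereal ` {t. 0 \<le> t \<and> X \<omega> t = z})"

definition meeting_time :: "('w \<Rightarrow> real \<Rightarrow> 'a) \<Rightarrow> ('w \<Rightarrow> real \<Rightarrow> 'a) \<Rightarrow> 'w \<Rightarrow> ereal" where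
  "meeting_time Y Z \<omega> = Inf (ereal ` {t. 0 \<le> t \<and> Y \<omega> t = Z \<omega> t})"

abbreviation path_space :: "(real \<Rightarrow> 'a) measure" where
  "path_space \<equiv> Pi\<^sub>M UNIV (\<lambda>_. count_space UNIV)"

end

theory Submission
  imports Defs
begin

text \<open>
  Transitivity together with reversibility and irreducibility forces P to be symmetric.
  Sampling on a grid of mesh h, the pair (Y, Z) is a Markov chain with kernel
  H(lamY h) \<otimes> H(lamZ h), where H(s) = exp(s (P - I)), and X run at speed lamY + lamZ is a chain
  with kernel H((lamY + lamZ) h) = H(lamY h) H(lamZ h). Let V_n(a, b) be the probability that the
  latter chain started at a avoids b for n steps. By transitivity V_n commutes with the symmetric
  matrix H(lamZ h), so a step of Z can be handed over to Y, and by induction the probability that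
  the pair started at (a, b) avoids the diagonal for n steps is V_n(a, b). Right-continuity of the
  paths turns these sampled probabilities into the laws of the hitting and meeting times, first
  on dyadic grids of a fixed horizon and then as the horizon decreases to the given time.
\<close>

section \<open>Matrix powers and the heat semigroup\<close>

definition mat_mult :: "('a::finite \<Rightarrow> 'a \<Rightarrow> real) \<Rightarrow> ('a \<Rightarrow> 'a \<Rightarrow> real) \<Rightarrow> 'a \<Rightarrow> 'a \<Rightarrow> real" where
  "mat_mult A B = (\<lambda>a b. \<Sum>w\<in>UNIV. A a w * B w b)"

lemma mat_mult_assoc: "mat_mult (mat_mult A B) C = mat_mult A (mat_mult B C)"
proof (intro ext)
  fix a b
  have "mat_mult (mat_mult A B) C a b = (\<Sum>w\<in>UNIV. \<Sum>v\<in>UNIV. A a v * B v w * C w b)"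
    by (simp add: mat_mult_def sum_distrib_right)
  also have "\<dots> = (\<Sum>v\<in>UNIV. \<Sum>w\<in>UNIV. A a v * B v w * C w b)" by (rule sum.swap)
  also have "\<dots> = mat_mult A (mat_mult B C) a b"
    by (simp add: mat_mult_def sum_distrib_left mult.assoc)
  finally show "mat_mult (mat_mult A B) C a b = mat_mult A (mat_mult B C) a b" .
qed

lemma mat_mult_id_right: "mat_mult A (\<lambda>x y. if x = y then 1 else 0) = A"
  unfolding mat_mult_def by (intro ext) (simp add: if_distrib cong: if_cong)

lemma mat_mult_id_left: "mat_mult (\<lambda>x y. if x = y then 1 else 0) A = A"
  unfolding mat_mult_def by (intro ext) (simp add: if_distrib if_distribR cong: if_cong)

lemma matpow_Suc_right: "matpow P (Suc n) = mat_mult (matpow P n) P"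
  by (simp add: mat_mult_def)

lemma matpow_add: "matpow P (m + n) = mat_mult (matpow P m) (matpow P n)"
  by (induction n) (simp_all only: add_0_right add_Suc_right matpow.simps(1) matpow_Suc_right
      mat_mult_id_right mat_mult_assoc)

lemma matpow_1: "matpow P 1 = P"
  using matpow_Suc_right[of P 0] by (simp add: mat_mult_id_left)

lemma matpow_nonneg: "stochastic_matrix P \<Longrightarrow> matpow P n x y \<ge> 0"
  by (induction n arbitrary: y) (auto simp: stochastic_matrix_def intro!: sum_nonneg)

lemma matpow_row_sum: "stochastic_matrix P \<Longrightarrow> (\<Sum>y\<in>UNIV. matpow P n x y) = 1"
proof (induction n)
  case 0
  then show ?case by simp
next
  case (Suc n)
  have "(\<Sum>y\<in>UNIV. matpow P (Suc n) x y) = (\<Sum>w\<in>UNIV. matpow P n x w * (\<Sum>y\<in>UNIV. P w y))"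
    by (simp add: sum_distrib_left) (rule sum.swap)
  also have "\<dots> = 1" using Suc by (simp add: stochastic_matrix_def)
  finally show ?case .
qed

lemma matpow_le_1: "stochastic_matrix P \<Longrightarrow> matpow P n x y \<le> 1"
  using member_le_sum[of y UNIV "matpow P n x"] by (simp add: matpow_nonneg matpow_row_sum)

lemma matpow_symmetric:
  assumes "\<And>x y. P x y = P y x"
  shows "matpow P n x y = matpow P n y x"
proof (induction n arbitrary: x y)
  case 0
  then show ?case by auto
next
  case (Suc n)
  have "matpow P (Suc n) x y = mat_mult P (matpow P n) x y"
    using matpow_add[of P 1 n] by (simp only: matpow_1 plus_1_eq_Suc)
  also have "\<dots> = matpow P (Suc n) y x"
    using Suc assms by (simp add: mat_mult_def mult.commute)
  finally show ?case .
qed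

lemma matpow_Suc_pos_obtain:
  assumes "stochastic_matrix P" and "matpow P (Suc n) y x > 0"
  obtains w where "matpow P n y w > 0" and "P w x > 0"
proof -
  have "\<not> (\<forall>w\<in>UNIV. matpow P n y w * P w x \<le> 0)"
    using assms(2) sum_nonpos[of UNIV "\<lambda>w. matpow P n y w * P w x"] by auto
  then obtain w where "matpow P n y w * P w x > 0" by (auto simp: not_le)
  moreover have "matpow P n y w \<ge> 0" "P w x \<ge> 0"
    using assms(1) by (simp_all add: matpow_nonneg stochastic_matrix_def)
  ultimately show ?thesis using that by (auto simp: zero_less_mult_iff)
qed

definition heat :: "('a::finite \<Rightarrow> 'a \<Rightarrow> real) \<Rightarrow> real \<Rightarrow> 'a \<Rightarrow> 'a \<Rightarrow> real" where
  "heat P s x y = exp (- s) * (\<Sum>n. s ^ n / fact n * matpow P n x y)"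

lemma heat_kernel_eq_heat: "heat_kernel lam P t = heat P (lam * t)"
  unfolding heat_kernel_def heat_def by (intro ext) simp

lemma summable_norm_heat_series:
  assumes "stochastic_matrix P"
  shows "summable (\<lambda>n. norm (s ^ n / fact n * matpow P n x y))"
proof (rule summable_comparison_test[OF _ summable_exp[of "\<bar>s\<bar>"]], intro exI allI impI)
  fix n :: nat
  have "norm (norm (s ^ n / fact n * matpow P n x y)) = \<bar>s\<bar> ^ n / fact n * matpow P n x y"
    using matpow_nonneg[OF assms] by (simp add: abs_mult power_abs)
  also have "\<dots> \<le> \<bar>s\<bar> ^ n / fact n"
    using mult_left_mono[OF matpow_le_1[OF assms], of "\<bar>s\<bar> ^ n / fact n"] by simp
  finally show "norm (norm (s ^ n / fact n * matpow P n x y)) \<le> inverse (fact n) * \<bar>s\<bar> ^ n"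
    by (simp add: divide_inverse mult.commute)
qed

lemma summable_heat_series: "stochastic_matrix P \<Longrightarrow> summable (\<lambda>n. s ^ n / fact n * matpow P n x y)"
  by (rule summable_norm_cancel[OF summable_norm_heat_series])

lemma heat_row_sum:
  assumes "stochastic_matrix P"
  shows "(\<Sum>y\<in>UNIV. heat P s x y) = 1"
proof -
  have "(\<Sum>y\<in>UNIV. \<Sum>n. s ^ n / fact n * matpow P n x y) = (\<Sum>n. \<Sum>y\<in>UNIV. s ^ n / fact n * matpow P n x y)"
    by (rule suminf_sum[symmetric]) (rule summable_heat_series[OF assms])
  also have "\<dots> = (\<Sum>n. s ^ n / fact n)"
    by (simp only: sum_distrib_left[symmetric] matpow_row_sum[OF assms] mult_1_right)
  also have "\<dots> = exp s"
    using exp_converges[of s] by (simp add: sums_iff divide_inverse mult.commute)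
  finally have "(\<Sum>y\<in>UNIV. \<Sum>n. s ^ n / fact n * matpow P n x y) = exp s" .
  then show ?thesis
    unfolding heat_def by (simp only: sum_distrib_left[symmetric]) (simp add: exp_minus field_simps)
qed

lemma heat_symmetric: "(\<And>x y. P x y = P y x) \<Longrightarrow> heat P s x y = heat P s y x"
  unfolding heat_def using matpow_symmetric[of P] by simp

lemma heat_0: "heat P 0 = (\<lambda>a b. if a = b then 1 else 0)"
proof (intro ext)
  fix a b
  have "(\<lambda>n. (0::real) ^ n / fact n * matpow P n a b) = (\<lambda>n. if n = 0 then matpow P 0 a b else 0)"
    by (intro ext) simp
  then have "(\<Sum>n. (0::real) ^ n / fact n * matpow P n a b) = matpow P 0 a b"
    using sums_single[of 0 "\<lambda>_. matpow P 0 a b"] by (simp add: sums_iff)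
  then show "heat P 0 a b = (if a = b then 1 else 0)" unfolding heat_def by simp
qed

lemma heat_add:
  assumes st: "stochastic_matrix P"
  shows "mat_mult (heat P a) (heat P b) = heat P (a + b)"
proof (intro ext)
  fix x y
  define f where "f w n = a ^ n / fact n * matpow P n x w" for w n
  define g where "g w n = b ^ n / fact n * matpow P n w y" for w n
  have binomial: "(\<Sum>w\<in>UNIV. \<Sum>i\<le>k. f w i * g w (k - i)) = (a + b) ^ k / fact k * matpow P k x y" for k
  proof -
    have "(\<Sum>w\<in>UNIV. \<Sum>i\<le>k. f w i * g w (k - i))
        = (\<Sum>i\<le>k. a ^ i / fact i * (b ^ (k - i) / fact (k - i)) * mat_mult (matpow P i) (matpow P (k - i)) x y)"
      unfolding f_def g_def mat_mult_def
      by (subst sum.swap) (simp add: sum_distrib_left sum_divide_distrib mult_ac)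
    also have "\<dots> = (\<Sum>i\<le>k. a ^ i / fact i * (b ^ (k - i) / fact (k - i))) * matpow P k x y"
      by (simp add: sum_distrib_right matpow_add[symmetric])
    also have "\<dots> = (a + b) ^ k / fact k * matpow P k x y"
      using exp_series_add_commuting[of a b k] by (simp add: divide_inverse mult_ac)
    finally show ?thesis .
  qed
  have "(\<Sum>w\<in>UNIV. (\<Sum>n. f w n) * (\<Sum>n. g w n)) = (\<Sum>w\<in>UNIV. \<Sum>k. \<Sum>i\<le>k. f w i * g w (k - i))"
    by (intro sum.cong refl Cauchy_product; unfold f_def g_def; rule summable_norm_heat_series[OF st])
  also have "\<dots> = (\<Sum>k. \<Sum>w\<in>UNIV. \<Sum>i\<le>k. f w i * g w (k - i))"
    by (rule suminf_sum[symmetric], rule summable_Cauchy_product;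
        unfold f_def g_def; rule summable_norm_heat_series[OF st])
  finally have "(\<Sum>w\<in>UNIV. (\<Sum>n. f w n) * (\<Sum>n. g w n)) = (\<Sum>k. (a + b) ^ k / fact k * matpow P k x y)"
    by (simp only: binomial)
  moreover have "mat_mult (heat P a) (heat P b) x y
      = exp (- a) * exp (- b) * (\<Sum>w\<in>UNIV. (\<Sum>n. f w n) * (\<Sum>n. g w n))"
    unfolding mat_mult_def heat_def f_def g_def by (simp add: sum_distrib_left mult_ac)
  ultimately show "mat_mult (heat P a) (heat P b) x y = heat P (a + b) x y"
    unfolding heat_def by (simp add: exp_add[symmetric])
qed

section \<open>Automorphism invariance and symmetry of the chain\<close>

definition aut_invariant :: "('a \<Rightarrow> 'a \<Rightarrow> real) \<Rightarrow> ('a \<Rightarrow> 'a \<Rightarrow> real) \<Rightarrow> bool" where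
  "aut_invariant P A \<longleftrightarrow> (\<forall>\<phi>. automorphism P \<phi> \<longrightarrow> (\<forall>a b. A (\<phi> a) (\<phi> b) = A a b))"

lemma sum_UNIV_bij_reindex:
  "bij (\<phi>::'a::finite \<Rightarrow> 'a) \<Longrightarrow> (\<Sum>w\<in>UNIV. f (\<phi> w)) = (\<Sum>w\<in>UNIV. f w)"
  by (metis bij_def sum.reindex_cong)

lemma aut_invariant_self: "aut_invariant P P"
  unfolding aut_invariant_def automorphism_def by auto

lemma aut_invariant_mat_mult:
  assumes "aut_invariant P A" and "aut_invariant P B"
  shows "aut_invariant P (mat_mult A B)"
  unfolding aut_invariant_def
proof (intro allI impI)
  fix \<phi> a b assume au: "automorphism P \<phi>"
  then have "bij \<phi>" by (simp add: automorphism_def)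
  then have "mat_mult A B (\<phi> a) (\<phi> b) = (\<Sum>w\<in>UNIV. A (\<phi> a) (\<phi> w) * B (\<phi> w) (\<phi> b))"
    unfolding mat_mult_def by (rule sum_UNIV_bij_reindex[symmetric])
  also have "\<dots> = mat_mult A B a b"
    using assms au by (simp add: aut_invariant_def mat_mult_def)
  finally show "mat_mult A B (\<phi> a) (\<phi> b) = mat_mult A B a b" .
qed

lemma aut_invariant_matpow: "aut_invariant P (matpow P n)"
proof (induction n)
  case 0
  then show ?case unfolding aut_invariant_def automorphism_def by (auto simp: bij_def inj_eq)
next
  case (Suc n)
  then show ?case by (simp only: matpow_Suc_right aut_invariant_mat_mult aut_invariant_self)
qed

lemma aut_invariant_heat: "aut_invariant P (heat P s)"
  using aut_invariant_matpow[of P] unfolding aut_invariant_def heat_def by simp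

lemma aut_invariant_diagonal:
  assumes "transitive_chain P" and "aut_invariant P A"
  shows "A a a = A b b"
proof -
  obtain \<phi> where "automorphism P \<phi>" and "\<phi> b = a"
    using assms(1) unfolding transitive_chain_def by blast
  then show ?thesis using assms(2) unfolding aut_invariant_def by metis
qed

lemma transitive_chain_col_sum:
  assumes st: "stochastic_matrix P" and tr: "transitive_chain P"
  shows "(\<Sum>x\<in>UNIV. P x y) = 1"
proof -
  have const: "(\<Sum>x\<in>UNIV. P x y) = (\<Sum>x\<in>UNIV. P x y')" for y'
  proof -
    obtain \<phi> where au: "automorphism P \<phi>" and "\<phi> y' = y"
      using tr unfolding transitive_chain_def by blast
    moreover have "bij \<phi>" using au by (simp add: automorphism_def)
    ultimately have "(\<Sum>x\<in>UNIV. P x y) = (\<Sum>x\<in>UNIV. P (\<phi> x) (\<phi> y'))"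
      using sum_UNIV_bij_reindex[of \<phi> "\<lambda>x. P x y"] by simp
    also have "\<dots> = (\<Sum>x\<in>UNIV. P x y')" using au by (simp add: automorphism_def)
    finally show ?thesis .
  qed
  have "real CARD('a) * (\<Sum>x\<in>UNIV. P x y) = (\<Sum>y'\<in>UNIV. \<Sum>x\<in>UNIV. P x y')"
    using sum.cong[OF refl const, of UNIV] by simp
  also have "\<dots> = (\<Sum>x\<in>UNIV. \<Sum>y'\<in>UNIV. P x y')" by (rule sum.swap)
  also have "\<dots> = real CARD('a)" using st by (simp add: stochastic_matrix_def)
  finally show ?thesis by simp
qed

text \<open>A maximum principle: with column sums 1, detailed balance makes \<pi> x the
  P-weighted average of \<pi> over the predecessors of x.\<close>
lemma detailed_balance_max_pred:
  assumes st: "stochastic_matrix P" and col: "\<And>y. (\<Sum>x\<in>UNIV. P x y) = 1"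
    and db: "\<And>x y. \<pi> x * P x y = \<pi> y * P y x"
    and max: "\<And>w. \<pi> w \<le> \<pi> x" and edge: "P w x > 0"
  shows "\<pi> w = \<pi> x"
proof -
  have "(\<Sum>v\<in>UNIV. P v x * (\<pi> x - \<pi> v)) = \<pi> x * (\<Sum>v\<in>UNIV. P v x) - (\<Sum>v\<in>UNIV. \<pi> v * P v x)"
    by (simp add: algebra_simps sum_subtractf sum_distrib_left)
  also have "(\<Sum>v\<in>UNIV. \<pi> v * P v x) = (\<Sum>v\<in>UNIV. \<pi> x * P x v)"
    by (intro sum.cong refl) (rule db)
  also have "(\<Sum>v\<in>UNIV. \<pi> x * P x v) = \<pi> x"
    using st by (simp add: stochastic_matrix_def flip: sum_distrib_left)
  finally have "(\<Sum>v\<in>UNIV. P v x * (\<pi> x - \<pi> v)) = 0" by (simp add: col)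
  moreover have "\<forall>v\<in>UNIV. 0 \<le> P v x * (\<pi> x - \<pi> v)"
    using st max by (auto simp: stochastic_matrix_def)
  ultimately have "P w x * (\<pi> x - \<pi> w) = 0" by (simp add: sum_nonneg_eq_0_iff)
  then show ?thesis using edge by simp
qed

lemma detailed_balance_weights_constant:
  assumes st: "stochastic_matrix P" and irr: "irreducible_chain P"
    and col: "\<And>y. (\<Sum>x\<in>UNIV. P x y) = 1"
    and db: "\<And>x y. \<pi> x * P x y = \<pi> y * P y x"
  shows "\<pi> y = \<pi> y'"
proof -
  have "Max (range \<pi>) \<in> range \<pi>" by (rule Max_in) auto
  then obtain x where x: "\<pi> x = Max (range \<pi>)" by (metis rangeE)
  have max: "\<pi> w \<le> \<pi> x" for w unfolding x by simp
  have "\<pi> y = \<pi> x" if "matpow P n y x' > 0" and "\<pi> x' = \<pi> x" for n y x'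
    using that
  proof (induction n arbitrary: x')
    case 0
    then show ?case by (simp split: if_splits)
  next
    case (Suc n)
    obtain w where "matpow P n y w > 0" and "P w x' > 0"
      using matpow_Suc_pos_obtain[OF st Suc.prems(1)] .
    moreover have "\<pi> w = \<pi> x"
      using detailed_balance_max_pred[OF st col db, of x'] max \<open>P w x' > 0\<close> Suc.prems(2) by simp
    ultimately show ?case using Suc.IH by blast
  qed
  then have "\<pi> v = \<pi> x" for v
    using irr unfolding irreducible_chain_def by blast
  then show ?thesis by metis
qed

lemma transitive_reversible_chain_symmetric:
  assumes st: "stochastic_matrix P" and "irreducible_chain P"
    and "reversible_chain P" and tr: "transitive_chain P"
  shows "P x y = P y x"
proof -
  obtain \<pi> where pos: "\<pi> x > 0" and db: "\<And>x y. \<pi> x * P x y = \<pi> y * P y x"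
    using assms(3) unfolding reversible_chain_def by blast
  moreover have "\<pi> y = \<pi> x"
    using detailed_balance_weights_constant[OF st assms(2) transitive_chain_col_sum[OF st tr] db] .
  ultimately show ?thesis by (metis mult_cancel_left less_irrefl)
qed

section \<open>Staying and avoiding probabilities\<close>

fun stay_prob :: "('b::finite \<Rightarrow> 'b \<Rightarrow> real) \<Rightarrow> 'b set \<Rightarrow> nat \<Rightarrow> 'b \<Rightarrow> real" where
  "stay_prob K S 0 a = (if a \<in> S then 1 else 0)"
| "stay_prob K S (Suc n) a = (if a \<in> S then (\<Sum>c\<in>UNIV. K a c * stay_prob K S n c) else 0)"

definition avoid_prob :: "('a::finite \<Rightarrow> 'a \<Rightarrow> real) \<Rightarrow> nat \<Rightarrow> 'a \<Rightarrow> 'a \<Rightarrow> real" where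
  "avoid_prob K n a b = stay_prob K (- {b}) n a"

lemma stay_prob_id: "stay_prob (\<lambda>a b. if a = b then 1 else 0) S n a = (if a \<in> S then 1 else 0)"
  by (induction n arbitrary: a) (simp_all add: if_distrib if_distribR cong: if_cong)

lemma avoid_prob_0: "avoid_prob K 0 a b = (if a = b then 0 else 1)"
  by (simp add: avoid_prob_def)

lemma avoid_prob_Suc:
  "avoid_prob K (Suc n) a b
     = mat_mult K (avoid_prob K n) a b - (if a = b then mat_mult K (avoid_prob K n) a a else 0)"
  by (simp add: avoid_prob_def mat_mult_def)

lemma aut_invariant_avoid_prob:
  assumes "aut_invariant P K"
  shows "aut_invariant P (avoid_prob K n)"
proof (induction n)
  case 0
  then show ?case by (auto simp: aut_invariant_def automorphism_def avoid_prob_0 bij_def inj_eq)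
next
  case (Suc n)
  have "aut_invariant P (mat_mult K (avoid_prob K n))"
    using assms Suc.IH by (rule aut_invariant_mat_mult)
  then show ?case
    by (auto simp: aut_invariant_def automorphism_def avoid_prob_Suc bij_def inj_eq)
qed

lemma mat_mult_commute_sub_diagonal:
  assumes AB: "mat_mult A B = mat_mult B A" and d: "\<And>a b. d a = d b"
  shows "mat_mult (\<lambda>a b. A a b - (if a = b then d a else 0)) B
       = mat_mult B (\<lambda>a b. A a b - (if a = b then d a else 0))"
proof (intro ext)
  fix a b
  have "mat_mult (\<lambda>a b. A a b - (if a = b then d a else 0)) B a b
      = (\<Sum>w\<in>UNIV. A a w * B w b - (if w = a then d a * B w b else 0))"
    unfolding mat_mult_def by (intro sum.cong refl) (auto simp: left_diff_distrib)
  also have "\<dots> = mat_mult A B a b - d a * B a b"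
    by (simp add: sum_subtractf mat_mult_def)
  also have "\<dots> = mat_mult B A a b - d b * B a b"
    using AB d[of a b] by simp
  also have "\<dots> = (\<Sum>w\<in>UNIV. B a w * A w b - (if w = b then d b * B a w else 0))"
    by (simp add: sum_subtractf mat_mult_def)
  also have "\<dots> = mat_mult B (\<lambda>a b. A a b - (if a = b then d a else 0)) a b"
    unfolding mat_mult_def by (intro sum.cong refl) (auto simp: right_diff_distrib)
  finally show "mat_mult (\<lambda>a b. A a b - (if a = b then d a else 0)) B a b
      = mat_mult B (\<lambda>a b. A a b - (if a = b then d a else 0)) a b" .
qed

text \<open>By transitivity the diagonal of K * avoid_prob K n is constant, so avoid_prob K (Suc n) is
  K * avoid_prob K n minus a multiple of the identity.\<close>
lemma avoid_prob_commute:
  assumes tr: "transitive_chain P" and K: "aut_invariant P K" and KB: "mat_mult K B = mat_mult B K"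
    and row: "\<And>x. (\<Sum>y\<in>UNIV. B x y) = 1" and col: "\<And>y. (\<Sum>x\<in>UNIV. B x y) = 1"
  shows "mat_mult (avoid_prob K n) B = mat_mult B (avoid_prob K n)"
proof (induction n)
  case 0
  have "mat_mult (avoid_prob K 0) B a b = 1 - B a b" for a b
    using col[of b] by (simp add: mat_mult_def avoid_prob_0 sum_subtractf if_distrib if_distribR
        sum.remove[of UNIV a] cong: if_cong)
  moreover have "mat_mult B (avoid_prob K 0) a b = 1 - B a b" for a b
    using row[of a] by (simp add: mat_mult_def avoid_prob_0 if_distrib if_distribR
        sum.remove[of UNIV b] cong: if_cong)
  ultimately show ?case by (intro ext) simp
next
  case (Suc n)
  define W where "W = mat_mult K (avoid_prob K n)"
  have "avoid_prob K (Suc n) = (\<lambda>a b. W a b - (if a = b then W a a else 0))"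
    by (intro ext) (simp add: avoid_prob_Suc W_def)
  moreover have "mat_mult W B = mat_mult B W"
    unfolding W_def by (simp only: mat_mult_assoc Suc.IH) (simp only: mat_mult_assoc[symmetric] KB)
  moreover have "W a a = W b b" for a b
    using aut_invariant_diagonal[OF tr aut_invariant_mat_mult[OF K aut_invariant_avoid_prob[OF K]]]
    unfolding W_def .
  ultimately show ?case by (simp only: mat_mult_commute_sub_diagonal)
qed

definition kernel_prod :: "('a \<Rightarrow> 'a \<Rightarrow> real) \<Rightarrow> ('b \<Rightarrow> 'b \<Rightarrow> real) \<Rightarrow> 'a \<times> 'b \<Rightarrow> 'a \<times> 'b \<Rightarrow> real" where
  "kernel_prod A B p q = A (fst p) (fst q) * B (snd p) (snd q)"

text \<open>The pair chain with kernel A \<otimes> B avoids the diagonal exactly as the chain with kernel A B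
  avoids a fixed state: a B-step of the second coordinate can be moved over to the first.\<close>
lemma stay_prob_off_diagonal:
  fixes A B :: "'a::finite \<Rightarrow> 'a \<Rightarrow> real"
  assumes Bsym: "\<And>x y. B x y = B y x"
    and comm: "\<And>n. mat_mult (avoid_prob (mat_mult A B) n) B = mat_mult B (avoid_prob (mat_mult A B) n)"
  shows "stay_prob (kernel_prod A B) {p. fst p \<noteq> snd p} n (a, b) = avoid_prob (mat_mult A B) n a b"
proof (induction n arbitrary: a b)
  case 0
  then show ?case by (simp add: avoid_prob_def)
next
  case (Suc n)
  define V where "V = avoid_prob (mat_mult A B) n"
  have IH: "stay_prob (kernel_prod A B) {p. fst p \<noteq> snd p} n q = V (fst q) (snd q)" for q
    using Suc.IH[of "fst q" "snd q"] by (simp add: V_def)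
  have "(\<Sum>q\<in>UNIV. kernel_prod A B (a, b) q * stay_prob (kernel_prod A B) {p. fst p \<noteq> snd p} n q)
      = (\<Sum>c\<in>UNIV. \<Sum>d\<in>UNIV. A a c * B b d * V c d)"
    by (simp add: IH kernel_prod_def sum.cartesian_product case_prod_beta
        UNIV_Times_UNIV[symmetric] del: UNIV_Times_UNIV)
  also have "\<dots> = (\<Sum>c\<in>UNIV. A a c * mat_mult V B c b)"
    by (simp add: mat_mult_def sum_distrib_left Bsym[of b] mult_ac)
  also have "\<dots> = mat_mult (mat_mult A B) V a b"
    by (simp add: comm V_def mat_mult_assoc) (simp add: mat_mult_def)
  finally show ?case
    by (simp add: V_def avoid_prob_def mat_mult_def[of "mat_mult A B"])
qed

lemma stay_prob_off_diagonal_heat: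
  assumes st: "stochastic_matrix P" and sym: "\<And>x y. P x y = P y x" and tr: "transitive_chain P"
  shows "stay_prob (kernel_prod (heat P \<alpha>) (heat P \<beta>)) {p. fst p \<noteq> snd p} n (a, b)
       = avoid_prob (heat P (\<alpha> + \<beta>)) n a b"
proof -
  let ?K = "heat P (\<alpha> + \<beta>)" and ?B = "heat P \<beta>"
  have Bsym: "?B x y = ?B y x" for x y by (rule heat_symmetric[OF sym])
  have col: "(\<Sum>x\<in>UNIV. ?B x y) = 1" for y
  proof -
    have "(\<Sum>x\<in>UNIV. ?B x y) = (\<Sum>x\<in>UNIV. ?B y x)" by (intro sum.cong refl) (rule Bsym)
    then show ?thesis by (simp only: heat_row_sum[OF st])
  qed
  have comm: "mat_mult (avoid_prob ?K m) ?B = mat_mult ?B (avoid_prob ?K m)" for m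
  proof (rule avoid_prob_commute[OF tr aut_invariant_heat _ heat_row_sum[OF st] col])
    show "mat_mult ?K ?B = mat_mult ?B ?K" by (simp only: heat_add[OF st] add_ac)
  qed
  moreover have "mat_mult (heat P \<alpha>) ?B = ?K" by (rule heat_add[OF st])
  ultimately show ?thesis
    using stay_prob_off_diagonal[where A = "heat P \<alpha>" and B = ?B, OF Bsym] by simp
qed

section \<open>Processes sampled at finitely many times\<close>

lemma sets_Collect_process_in:
  assumes "\<And>t. (\<lambda>\<omega>. W \<omega> t) \<in> measurable M (count_space UNIV)"
  shows "{\<omega>\<in>space M. W \<omega> t \<in> A} \<in> sets M"
proof -
  have "(\<lambda>\<omega>. W \<omega> t) -` A \<inter> space M \<in> sets M"
    using assms by (rule measurable_sets) simp
  moreover have "(\<lambda>\<omega>. W \<omega> t) -` A \<inter> space M = {\<omega>\<in>space M. W \<omega> t \<in> A}" by blast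
  ultimately show ?thesis by simp
qed

lemma sets_Collect_path_in:
  fixes n :: nat
  assumes "\<And>t. (\<lambda>\<omega>. W \<omega> t) \<in> measurable M (count_space UNIV)"
  shows "{\<omega>\<in>space M. \<forall>i\<le>n. W \<omega> (tt i) \<in> A i} \<in> sets M"
proof -
  have "{\<omega>\<in>space M. \<forall>i\<in>{..n}. W \<omega> (tt i) \<in> A i} \<in> sets M"
    by (rule sets.sets_Collect_finite_All) (simp_all add: sets_Collect_process_in[OF assms])
  then show ?thesis by (simp only: Ball_def atMost_iff)
qed
lemma sum_lists_Suc:
  fixes f :: "'b list \<Rightarrow> real"
  assumes "finite S"
  shows "(\<Sum>xs\<in>{xs. set xs \<subseteq> S \<and> length xs = Suc m}. f xs)
       = (\<Sum>ys\<in>{xs. set xs \<subseteq> S \<and> length xs = m}. \<Sum>b\<in>S. f (b # ys))"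
proof -
  have "(\<Sum>xs\<in>{xs. set xs \<subseteq> S \<and> length xs = Suc m}. f xs)
      = (\<Sum>p\<in>{xs. set xs \<subseteq> S \<and> length xs = m} \<times> S. f ((\<lambda>(xs, n). n # xs) p))"
    unfolding lists_length_Suc_eq by (subst sum.reindex[OF inj_split_Cons]) (simp add: comp_def)
  also have "\<dots> = (\<Sum>ys\<in>{xs. set xs \<subseteq> S \<and> length xs = m}. \<Sum>b\<in>S. f (b # ys))"
    by (simp add: sum.cartesian_product case_prod_beta)
  finally show ?thesis .
qed

lemma sum_paths_eq_stay_prob:
  fixes K :: "'b::finite \<Rightarrow> 'b \<Rightarrow> real"
  shows "(\<Sum>xs\<in>{xs. set xs \<subseteq> S \<and> length xs = Suc n}.
           (if xs ! 0 = a then 1 else 0) * (\<Prod>i<n. K (xs ! i) (xs ! Suc i))) = stay_prob K S n a"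
proof (induction n arbitrary: a)
  case 0
  have "{xs::'b list. set xs \<subseteq> S \<and> length xs = 0} = {[]}" by auto
  then show ?case by (simp add: sum_lists_Suc sum.delta')
next
  case (Suc n)
  define L where "L = {xs. set xs \<subseteq> S \<and> length xs = Suc n}"
  define Q where "Q ys = (\<Prod>i<n. K (ys ! i) (ys ! Suc i))" for ys
  have "(\<Sum>xs\<in>{xs. set xs \<subseteq> S \<and> length xs = Suc (Suc n)}.
           (if xs ! 0 = a then 1 else 0) * (\<Prod>i<Suc n. K (xs ! i) (xs ! Suc i)))
       = (\<Sum>ys\<in>L. \<Sum>b\<in>S. (if b = a then 1 else 0) * (K b (ys ! 0) * Q ys))"
    unfolding L_def Q_def
    by (simp only: sum_lists_Suc[OF finite] prod.lessThan_Suc_shift nth_Cons_0 nth_Cons_Suc)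
  also have "\<dots> = (\<Sum>ys\<in>L. if a \<in> S then K a (ys ! 0) * Q ys else 0)"
    by (intro sum.cong refl) (simp add: if_distrib if_distribR sum.delta' cong: if_cong)
  also have "\<dots> = (if a \<in> S then (\<Sum>ys\<in>L. K a (ys ! 0) * Q ys) else 0)"
    by simp
  also have "(\<Sum>ys\<in>L. K a (ys ! 0) * Q ys)
      = (\<Sum>ys\<in>L. \<Sum>c\<in>UNIV. K a c * ((if ys ! 0 = c then 1 else 0) * Q ys))"
    by (simp add: if_distrib if_distribR sum.delta cong: if_cong)
  also have "\<dots> = (\<Sum>c\<in>UNIV. K a c * (\<Sum>ys\<in>L. (if ys ! 0 = c then 1 else 0) * Q ys))"
    by (subst sum.swap) (simp add: sum_distrib_left)
  also have "\<dots> = (\<Sum>c\<in>UNIV. K a c * stay_prob K S n c)"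
    using Suc.IH unfolding L_def Q_def by simp
  finally show ?case by simp
qed

lemma measure_path_stays_in:
  fixes W :: "'w \<Rightarrow> real \<Rightarrow> 'b::finite" and K :: "'b \<Rightarrow> 'b \<Rightarrow> real"
  assumes M: "prob_space M"
    and meas: "\<And>t. (\<lambda>\<omega>. W \<omega> t) \<in> measurable M (count_space UNIV)"
    and fidi: "\<And>s. measure M {\<omega>\<in>space M. \<forall>i\<le>n. W \<omega> (tt i) = s i}
                  = (if s 0 = w0 then 1 else 0) * (\<Prod>i<n. K (s i) (s (Suc i)))"
  shows "measure M {\<omega>\<in>space M. \<forall>i\<le>n. W \<omega> (tt i) \<in> S} = stay_prob K S n w0"
proof -
  interpret prob_space M by (rule M)
  define L where "L = {xs. set xs \<subseteq> S \<and> length xs = Suc n}"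
  define B where "B xs = {\<omega>\<in>space M. \<forall>i\<le>n. W \<omega> (tt i) = xs ! i}" for xs
  have B_sets: "B xs \<in> sets M" for xs
    using sets_Collect_path_in[OF meas, where A = "\<lambda>i. {xs ! i}"] unfolding B_def
    by (simp only: singleton_iff)
  have eq: "{\<omega>\<in>space M. \<forall>i\<le>n. W \<omega> (tt i) \<in> S} = (\<Union>xs\<in>L. B xs)"
  proof (intro equalityI subsetI)
    fix \<omega> assume "\<omega> \<in> {\<omega>\<in>space M. \<forall>i\<le>n. W \<omega> (tt i) \<in> S}"
    then have "map (\<lambda>i. W \<omega> (tt i)) [0..<Suc n] \<in> L \<and> \<omega> \<in> B (map (\<lambda>i. W \<omega> (tt i)) [0..<Suc n])"
      unfolding L_def B_def by (auto simp del: upt_Suc simp: nth_map less_Suc_eq_le)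
    then show "\<omega> \<in> (\<Union>xs\<in>L. B xs)" by blast
  next
    fix \<omega> assume "\<omega> \<in> (\<Union>xs\<in>L. B xs)"
    then obtain xs where xs: "xs \<in> L" and \<omega>: "\<omega> \<in> B xs" by blast
    have "W \<omega> (tt i) \<in> S" if "i \<le> n" for i
      using xs \<omega> that nth_mem[of i xs] unfolding L_def B_def by auto
    then show "\<omega> \<in> {\<omega>\<in>space M. \<forall>i\<le>n. W \<omega> (tt i) \<in> S}" using \<omega> unfolding B_def by auto
  qed
  have disj: "disjoint_family_on B L"
  proof (unfold disjoint_family_on_def, intro ballI impI)
    fix xs ys assume "xs \<in> L" "ys \<in> L" "xs \<noteq> ys"
    then have "\<not> (\<forall>i\<le>n. xs ! i = ys ! i)"
      unfolding L_def using nth_equalityI[of xs ys] by (auto simp: less_Suc_eq_le)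
    then show "B xs \<inter> B ys = {}" unfolding B_def by auto
  qed
  have "measure M {\<omega>\<in>space M. \<forall>i\<le>n. W \<omega> (tt i) \<in> S} = (\<Sum>xs\<in>L. measure M (B xs))"
    unfolding eq
    by (rule measure_finite_Union[OF _ _ disj]) (auto simp: L_def B_sets emeasure_finite finite_lists_length_eq)
  also have "\<dots> = (\<Sum>xs\<in>L. (if xs ! 0 = w0 then 1 else 0) * (\<Prod>i<n. K (xs ! i) (xs ! Suc i)))"
    unfolding B_def by (intro sum.cong refl) (rule fidi)
  also have "\<dots> = stay_prob K S n w0" unfolding L_def by (rule sum_paths_eq_stay_prob)
  finally show ?thesis .
qed

lemma space_path_space: "space path_space = UNIV"
  by (auto simp: space_PiM)

lemma measure_indep_pair_path:
  fixes Y Z :: "'v \<Rightarrow> real \<Rightarrow> 'a" and n :: nat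
  assumes N: "prob_space N" and ind: "prob_space.indep_var N path_space Y path_space Z"
    and Y: "\<And>s. measure N {\<omega>\<in>space N. \<forall>i\<le>n. Y \<omega> (tt i) = s i}
                  = (if s 0 = y0 then 1 else 0) * (\<Prod>i<n. A (s i) (s (Suc i)))"
    and Z: "\<And>s. measure N {\<omega>\<in>space N. \<forall>i\<le>n. Z \<omega> (tt i) = s i}
                  = (if s 0 = z0 then 1 else 0) * (\<Prod>i<n. B (s i) (s (Suc i)))"
  shows "measure N {\<omega>\<in>space N. \<forall>i\<le>n. (Y \<omega> (tt i), Z \<omega> (tt i)) = s i}
       = (if s 0 = (y0, z0) then 1 else 0) * (\<Prod>i<n. kernel_prod A B (s i) (s (Suc i)))"
proof -
  interpret prob_space N by (rule N)
  define F where "F v = {f :: real \<Rightarrow> 'a. \<forall>i\<le>n. f (tt i) = v i}" for v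
  have F_sets: "F v \<in> sets path_space" for v
  proof -
    have "(\<lambda>f. f t) \<in> measurable path_space (count_space UNIV)" for t :: real
      by (rule measurable_component_singleton) simp
    from sets_Collect_path_in[where W = "\<lambda>f t. f t", OF this,
        where A = "\<lambda>i. {v i}" and n = n and tt = tt]
    show ?thesis unfolding F_def space_path_space by simp
  qed
  have "{\<omega>\<in>space N. \<forall>i\<le>n. (Y \<omega> (tt i), Z \<omega> (tt i)) = s i}
      = (\<lambda>\<omega>. (Y \<omega>, Z \<omega>)) -` (F (fst \<circ> s) \<times> F (snd \<circ> s)) \<inter> space N"
    unfolding F_def by (auto simp: prod_eq_iff)
  also have "prob \<dots> = prob (Y -` F (fst \<circ> s) \<inter> space N) * prob (Z -` F (snd \<circ> s) \<inter> space N)"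
    by (rule indep_varD[OF ind F_sets F_sets])
  also have "Y -` F (fst \<circ> s) \<inter> space N = {\<omega>\<in>space N. \<forall>i\<le>n. Y \<omega> (tt i) = fst (s i)}"
    unfolding F_def by auto
  also have "Z -` F (snd \<circ> s) \<inter> space N = {\<omega>\<in>space N. \<forall>i\<le>n. Z \<omega> (tt i) = snd (s i)}"
    unfolding F_def by auto
  finally show ?thesis
    by (simp add: Y Z kernel_prod_def prod.distrib prod_eq_iff)
qed

lemma ctmc_grid_fidi:
  assumes X: "ctmc M X lam P x0" and h: "h \<ge> 0"
  shows "measure M {\<omega>\<in>space M. \<forall>i\<le>n. X \<omega> (real i * h) = s i}
       = (if s 0 = x0 then 1 else 0) * (\<Prod>i<n. heat P (lam * h) (s i) (s (Suc i)))"
proof -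
  have "\<forall>i<n. real i * h \<le> real (Suc i) * h" using h by (auto intro: mult_right_mono)
  moreover have "(1 + real i) * h - real i * h = h" for i by (simp add: algebra_simps)
  ultimately show ?thesis
    using X unfolding ctmc_def by (simp add: heat_kernel_eq_heat)
qed

section \<open>Exit times of right-continuous processes\<close>

definition exit_time :: "('w \<Rightarrow> real \<Rightarrow> 'a) \<Rightarrow> 'a set \<Rightarrow> 'w \<Rightarrow> ereal" where
  "exit_time W S \<omega> = Inf (ereal ` {t. 0 \<le> t \<and> W \<omega> t \<notin> S})"

lemma hitting_time_eq_exit_time: "hitting_time X z = exit_time X (- {z})"
  unfolding hitting_time_def exit_time_def by simp

lemma meeting_time_eq_exit_time:
  "meeting_time Y Z = exit_time (\<lambda>\<omega> t. (Y \<omega> t, Z \<omega> t)) {p. fst p \<noteq> snd p}"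
  unfolding meeting_time_def exit_time_def by simp

lemma exit_time_le_iff:
  assumes \<alpha>: "\<alpha> > 0"
  shows "exit_time W S \<omega> \<le> ereal c \<longleftrightarrow> (\<forall>k. \<exists>t. 0 \<le> t \<and> t < c + \<alpha> / real (Suc k) \<and> W \<omega> t \<notin> S)"
proof -
  have "exit_time W S \<omega> \<le> ereal c \<longleftrightarrow> (\<forall>y>ereal c. \<exists>t. 0 \<le> t \<and> ereal t < y \<and> W \<omega> t \<notin> S)"
    unfolding exit_time_def INF_le_iff by auto
  also have "\<dots> \<longleftrightarrow> (\<forall>k. \<exists>t. 0 \<le> t \<and> t < c + \<alpha> / real (Suc k) \<and> W \<omega> t \<notin> S)"
  proof (intro iffI allI impI)
    fix k assume "\<forall>y>ereal c. \<exists>t. 0 \<le> t \<and> ereal t < y \<and> W \<omega> t \<notin> S"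
    then show "\<exists>t. 0 \<le> t \<and> t < c + \<alpha> / real (Suc k) \<and> W \<omega> t \<notin> S"
      using \<alpha> by (auto elim!: allE[of _ "ereal (c + \<alpha> / real (Suc k))"])
  next
    fix y assume all: "\<forall>k. \<exists>t. 0 \<le> t \<and> t < c + \<alpha> / real (Suc k) \<and> W \<omega> t \<notin> S"
      and "ereal c < y"
    obtain k where k: "ereal (c + \<alpha> / real (Suc k)) < y"
    proof (cases y)
      case (real r)
      then have "0 < (r - c) / \<alpha>" using \<open>ereal c < y\<close> \<alpha> by simp
      then obtain k where "inverse (real (Suc k)) < (r - c) / \<alpha>" using reals_Archimedean by blast
      then have "\<alpha> * inverse (real (Suc k)) < r - c"
        using mult_strict_left_mono[of _ _ \<alpha>] \<alpha> by fastforce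
      then show ?thesis using that[of k] real by (simp add: divide_inverse)
    qed (use that \<open>ereal c < y\<close> in auto)
    from all obtain t where "0 \<le> t" "t < c + \<alpha> / real (Suc k)" "W \<omega> t \<notin> S" by blast
    moreover from this(2) have "ereal t < ereal (c + \<alpha> / real (Suc k))" by simp
    then have "ereal t < y" using k by (rule less_trans)
    ultimately show "\<exists>t. 0 \<le> t \<and> ereal t < y \<and> W \<omega> t \<notin> S" by blast
  qed
  finally show ?thesis .
qed

lemma exit_time_le_0_iff:
  assumes "eventually (\<lambda>s. W \<omega> s = W \<omega> 0) (at_right 0)"
  shows "exit_time W S \<omega> \<le> ereal 0 \<longleftrightarrow> W \<omega> 0 \<notin> S"
proof
  obtain b where "0 < b" and b: "\<And>s. 0 < s \<Longrightarrow> s < b \<Longrightarrow> W \<omega> s = W \<omega> 0"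
    using assms unfolding eventually_at_right_field by blast
  assume "exit_time W S \<omega> \<le> ereal 0"
  then obtain t where "0 \<le> t" "t < 0 + b / real (Suc 0)" "W \<omega> t \<notin> S"
    unfolding exit_time_le_iff[OF \<open>0 < b\<close>] by blast
  then show "W \<omega> 0 \<notin> S" using b[of t] by (cases "t = 0") auto
next
  assume "W \<omega> 0 \<notin> S"
  then show "exit_time W S \<omega> \<le> ereal 0"
    unfolding exit_time_def by (intro Inf_lower) auto
qed

lemma right_continuous_dyadic_witness:
  fixes W :: "real \<Rightarrow> 'b"
  assumes ev: "eventually (\<lambda>s. W s = W t) (at_right t)" and t: "0 \<le> t" "t < a"
  shows "\<exists>m i. i < (2::nat) ^ m \<and> W (real i * (a / 2 ^ m)) = W t"
proof -
  obtain b where "t < b" and b: "\<And>s. t < s \<Longrightarrow> s < b \<Longrightarrow> W s = W t"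
    using ev unfolding eventually_at_right_field by blast
  have "(\<lambda>m. a / 2 ^ m) \<longlonglongrightarrow> 0" by (rule LIMSEQ_divide_realpow_zero) simp
  moreover have "0 < min (b - t) (a - t)" using \<open>t < b\<close> t by simp
  ultimately have "eventually (\<lambda>m. a / 2 ^ m < min (b - t) (a - t)) sequentially"
    by (rule order_tendstoD(2))
  then obtain m where m: "a / 2 ^ m < min (b - t) (a - t)"
    unfolding eventually_sequentially by blast
  define h where "h = a / 2 ^ m"
  have "h > 0" using t unfolding h_def by simp
  define i where "i = nat \<lceil>t / h\<rceil>"
  have "real i = of_int \<lceil>t / h\<rceil>" unfolding i_def using t \<open>h > 0\<close> by simp
  then have "t / h \<le> real i" "real i < t / h + 1" by linarith+
  then have lo: "t \<le> real i * h" and hi: "real i * h < t + h"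
    using \<open>h > 0\<close> by (simp_all add: field_simps)
  have h: "h < b - t" "h < a - t" using m unfolding h_def by simp_all
  have "real i * h < 2 ^ m * h" using hi h unfolding h_def by simp
  then have "real i < 2 ^ m" using \<open>h > 0\<close> by simp
  then have "i < 2 ^ m" by (simp only: of_nat_less_numeral_power_cancel_iff)
  moreover have "W (real i * h) = W t"
    using lo hi h b by (cases "real i * h = t") auto
  ultimately show ?thesis unfolding h_def by blast
qed

lemma exit_before_eq_Union_dyadic:
  assumes rc: "\<forall>\<omega>\<in>space M. \<forall>t\<ge>0. eventually (\<lambda>s. W \<omega> s = W \<omega> t) (at_right t)"
    and "0 < a"
  shows "{\<omega>\<in>space M. \<exists>t. 0 \<le> t \<and> t < a \<and> W \<omega> t \<notin> S}
       = (\<Union>m. {\<omega>\<in>space M. \<exists>i<(2::nat) ^ m. W \<omega> (real i * (a / 2 ^ m)) \<notin> S})"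
proof (intro equalityI subsetI)
  fix \<omega> assume "\<omega> \<in> {\<omega>\<in>space M. \<exists>t. 0 \<le> t \<and> t < a \<and> W \<omega> t \<notin> S}"
  then obtain t where \<omega>: "\<omega> \<in> space M" and t: "0 \<le> t" "t < a" "W \<omega> t \<notin> S" by blast
  obtain m i where "i < (2::nat) ^ m" "W \<omega> (real i * (a / 2 ^ m)) = W \<omega> t"
    using right_continuous_dyadic_witness[OF rc[rule_format, OF \<omega> t(1)] t(1,2)] by blast
  with \<omega> t(3) show "\<omega> \<in> (\<Union>m. {\<omega>\<in>space M. \<exists>i<(2::nat) ^ m. W \<omega> (real i * (a / 2 ^ m)) \<notin> S})"
    by (metis (mono_tags, lifting) UNIV_I UN_iff mem_Collect_eq)
next
  fix \<omega> assume "\<omega> \<in> (\<Union>m. {\<omega>\<in>space M. \<exists>i<(2::nat) ^ m. W \<omega> (real i * (a / 2 ^ m)) \<notin> S})"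
  then obtain m i where \<omega>: "\<omega> \<in> space M" and "i < (2::nat) ^ m" "W \<omega> (real i * (a / 2 ^ m)) \<notin> S"
    by blast
  moreover have "real i < 2 ^ m"
    using less_imp_of_nat_less[OF \<open>i < 2 ^ m\<close>, where 'a = real] by simp
  ultimately show "\<omega> \<in> {\<omega>\<in>space M. \<exists>t. 0 \<le> t \<and> t < a \<and> W \<omega> t \<notin> S}"
    using \<open>0 < a\<close> by (auto intro!: exI[of _ "real i * (a / 2 ^ m)"] simp: field_simps)
qed

lemma sets_Collect_grid_exit:
  assumes "\<And>t. (\<lambda>\<omega>. W \<omega> t) \<in> measurable M (count_space UNIV)"
  shows "{\<omega>\<in>space M. \<exists>i<(2::nat) ^ m. W \<omega> (real i * h) \<notin> S} \<in> sets M"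
proof -
  have "{\<omega>\<in>space M. \<exists>i\<in>{..<(2::nat) ^ m}. W \<omega> (real i * h) \<in> - S} \<in> sets M"
    by (rule sets.sets_Collect_finite_Ex[OF sets_Collect_process_in[OF assms]]) simp
  then show ?thesis by (simp only: Bex_def lessThan_iff Compl_iff)
qed

lemma measure_exit_before_dyadic_lim:
  assumes M: "prob_space M"
    and meas: "\<And>t. (\<lambda>\<omega>. W \<omega> t) \<in> measurable M (count_space UNIV)"
    and rc: "\<forall>\<omega>\<in>space M. \<forall>t\<ge>0. eventually (\<lambda>s. W \<omega> s = W \<omega> t) (at_right t)"
    and a: "0 < a"
  shows "(\<lambda>m. measure M {\<omega>\<in>space M. \<exists>i<(2::nat) ^ m. W \<omega> (real i * (a / 2 ^ m)) \<notin> S})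
       \<longlonglongrightarrow> measure M {\<omega>\<in>space M. \<exists>t. 0 \<le> t \<and> t < a \<and> W \<omega> t \<notin> S}"
proof -
  interpret prob_space M by (rule M)
  have "incseq (\<lambda>m. {\<omega>\<in>space M. \<exists>i<(2::nat) ^ m. W \<omega> (real i * (a / 2 ^ m)) \<notin> S})"
  proof (rule incseq_SucI, safe)
    fix m i \<omega> assume "\<omega> \<in> space M" "i < (2::nat) ^ m" "W \<omega> (real i * (a / 2 ^ m)) \<notin> S"
    moreover have "real (2 * i) * (a / 2 ^ Suc m) = real i * (a / 2 ^ m)" by simp
    ultimately show "\<exists>j<(2::nat) ^ Suc m. W \<omega> (real j * (a / 2 ^ Suc m)) \<notin> S"
      by (intro exI[of _ "2 * i"]) simp
  qed
  then show ?thesis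
    unfolding exit_before_eq_Union_dyadic[OF rc a]
    by (rule finite_Lim_measure_incseq[OF image_subsetI[OF sets_Collect_grid_exit[OF meas]]])
qed

lemma measure_exit_time_le_lim:
  assumes M: "prob_space M"
    and meas: "\<And>t. (\<lambda>\<omega>. W \<omega> t) \<in> measurable M (count_space UNIV)"
    and rc: "\<forall>\<omega>\<in>space M. \<forall>t\<ge>0. eventually (\<lambda>s. W \<omega> s = W \<omega> t) (at_right t)"
    and c: "0 \<le> c" and \<alpha>: "0 < \<alpha>"
  shows "(\<lambda>k. measure M {\<omega>\<in>space M. \<exists>t. 0 \<le> t \<and> t < c + \<alpha> / real (Suc k) \<and> W \<omega> t \<notin> S})
       \<longlonglongrightarrow> measure M {\<omega>\<in>space M. exit_time W S \<omega> \<le> ereal c}"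
proof -
  interpret prob_space M by (rule M)
  define D where "D k = {\<omega>\<in>space M. \<exists>t. 0 \<le> t \<and> t < c + \<alpha> / real (Suc k) \<and> W \<omega> t \<notin> S}" for k
  have D_sets: "D k \<in> sets M" for k
  proof -
    have "0 < c + \<alpha> / real (Suc k)" using c \<alpha> by (simp add: add_nonneg_pos)
    from exit_before_eq_Union_dyadic[OF rc this] show ?thesis
      unfolding D_def by (simp only:) (rule sets.countable_UN[OF image_subsetI[OF sets_Collect_grid_exit[OF meas]]])
  qed
  have "decseq D"
  proof (rule decseq_SucI)
    fix k
    have "\<alpha> / real (Suc (Suc k)) \<le> \<alpha> / real (Suc k)" using \<alpha> by (intro divide_left_mono) auto
    then show "D (Suc k) \<subseteq> D k" unfolding D_def by force
  qed
  then have "(\<lambda>k. measure M (D k)) \<longlonglongrightarrow> measure M (\<Inter>k. D k)"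
    by (rule finite_Lim_measure_decseq[OF image_subsetI[OF D_sets]])
  moreover have "{\<omega>\<in>space M. exit_time W S \<omega> \<le> ereal c} = (\<Inter>k. D k)"
    unfolding D_def exit_time_le_iff[OF \<alpha>] by auto
  ultimately show ?thesis unfolding D_def by simp
qed

text \<open>Approximating the exit time from outside by times c + \<alpha>/(k+1) and sampling each of these
  intervals on a dyadic grid expresses its distribution through the transition matrices K h
  of the sampled chain.\<close>
lemma measure_exit_time_le_stay_prob_lim:
  fixes W :: "'w \<Rightarrow> real \<Rightarrow> 'b::finite"
  assumes M: "prob_space M"
    and meas: "\<And>t. (\<lambda>\<omega>. W \<omega> t) \<in> measurable M (count_space UNIV)"
    and rc: "\<forall>\<omega>\<in>space M. \<forall>t\<ge>0. eventually (\<lambda>s. W \<omega> s = W \<omega> t) (at_right t)"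
    and c: "0 \<le> c" and \<alpha>: "0 < \<alpha>"
    and fidi: "\<And>h n s. 0 \<le> h \<Longrightarrow> measure M {\<omega>\<in>space M. \<forall>i\<le>n. W \<omega> (real i * h) = s i}
                  = (if s 0 = w0 then 1 else 0) * (\<Prod>i<n. K h (s i) (s (Suc i)))"
  shows "(\<lambda>k. lim (\<lambda>m. 1 - stay_prob (K ((c + \<alpha> / real (Suc k)) / 2 ^ m)) S (2 ^ m - 1) w0))
       \<longlonglongrightarrow> measure M {\<omega>\<in>space M. exit_time W S \<omega> \<le> ereal c}"
proof -
  interpret prob_space M by (rule M)
  have grid: "measure M {\<omega>\<in>space M. \<exists>i<(2::nat) ^ m. W \<omega> (real i * h) \<notin> S}
      = 1 - stay_prob (K h) S (2 ^ m - 1) w0" if "0 \<le> h" for h m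
  proof -
    have "i < (2::nat) ^ m \<longleftrightarrow> i \<le> 2 ^ m - 1" for i
      using zero_less_power[of "2::nat" m] by linarith
    then have "{\<omega>\<in>space M. \<exists>i<(2::nat) ^ m. W \<omega> (real i * h) \<notin> S}
        = space M - {\<omega>\<in>space M. \<forall>i\<le>2 ^ m - 1. W \<omega> (real i * h) \<in> S}"
      by auto
    then show ?thesis
      using prob_compl[OF sets_Collect_path_in[where W = W, OF meas,
            where tt = "\<lambda>i. real i * h" and A = "\<lambda>_. S"]]
        measure_path_stays_in[where tt = "\<lambda>i. real i * h", OF M meas fidi[OF that]] by simp
  qed
  have "lim (\<lambda>m. 1 - stay_prob (K ((c + \<alpha> / real (Suc k)) / 2 ^ m)) S (2 ^ m - 1) w0)
      = measure M {\<omega>\<in>space M. \<exists>t. 0 \<le> t \<and> t < c + \<alpha> / real (Suc k) \<and> W \<omega> t \<notin> S}" for k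
  proof (rule limI)
    define a where "a = c + \<alpha> / real (Suc k)"
    have "0 < a" unfolding a_def using c \<alpha> by (simp add: add_nonneg_pos)
    then have "(\<lambda>m. measure M {\<omega>\<in>space M. \<exists>i<(2::nat) ^ m. W \<omega> (real i * (a / 2 ^ m)) \<notin> S})
        = (\<lambda>m. 1 - stay_prob (K (a / 2 ^ m)) S (2 ^ m - 1) w0)"
      by (intro ext grid) simp
    with measure_exit_before_dyadic_lim[OF M meas rc \<open>0 < a\<close>, where S = S]
    show "(\<lambda>m. 1 - stay_prob (K ((c + \<alpha> / real (Suc k)) / 2 ^ m)) S (2 ^ m - 1) w0)
        \<longlonglongrightarrow> measure M {\<omega>\<in>space M. \<exists>t. 0 \<le> t \<and> t < c + \<alpha> / real (Suc k) \<and> W \<omega> t \<notin> S}"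
      unfolding a_def by (simp only:)
  qed
  then show ?thesis using measure_exit_time_le_lim[OF M meas rc c \<alpha>] by simp
qed

section \<open>Hitting and meeting times\<close>

lemma ctmc_hitting_time_le_0:
  assumes X: "ctmc M X lam P x0"
  shows "measure M {\<omega>\<in>space M. hitting_time X z \<omega> \<le> ereal 0} = (if z = x0 then 1 else 0)"
proof -
  have "hitting_time X z \<omega> \<le> ereal 0 \<longleftrightarrow> X \<omega> (real 0 * 0) = z" if "\<omega> \<in> space M" for \<omega>
    using X that exit_time_le_0_iff[of X \<omega> "- {z}"]
    unfolding ctmc_def hitting_time_eq_exit_time by simp
  then have "{\<omega>\<in>space M. hitting_time X z \<omega> \<le> ereal 0} = {\<omega>\<in>space M. \<forall>i\<le>0. X \<omega> (real i * 0) = z}"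
    by auto
  then show ?thesis using ctmc_grid_fidi[OF X order.refl, of 0 "\<lambda>_. z"] by simp
qed

lemma ctmc_hitting_time_prob_lim:
  assumes X: "ctmc M X 1 P x0" and L: "0 \<le> L" and t: "0 \<le> t"
  shows "(\<lambda>k. lim (\<lambda>m. 1 - avoid_prob (heat P (L * ((t + 1 / real (Suc k)) / 2 ^ m))) (2 ^ m - 1) x0 z))
       \<longlonglongrightarrow> measure M {\<omega>\<in>space M. hitting_time X z \<omega> \<le> ereal (L * t)}"
proof (cases "L = 0")
  case True
  then show ?thesis
    using ctmc_hitting_time_le_0[OF X] by (simp add: avoid_prob_def heat_0 stay_prob_id)
next
  case False
  with L have "0 < L" by simp
  have "(L * t + L / real (Suc k)) / 2 ^ m = L * ((t + 1 / real (Suc k)) / 2 ^ m)" for k m :: nat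
    by (simp add: field_simps)
  moreover have "(\<lambda>k. lim (\<lambda>m. 1 - stay_prob (heat P (1 * ((L * t + L / real (Suc k)) / 2 ^ m))) (- {z}) (2 ^ m - 1) x0))
      \<longlonglongrightarrow> measure M {\<omega>\<in>space M. exit_time X (- {z}) \<omega> \<le> ereal (L * t)}"
    using X L t \<open>0 < L\<close> unfolding ctmc_def
    by (intro measure_exit_time_le_stay_prob_lim ctmc_grid_fidi[OF X]) auto
  ultimately show ?thesis by (simp add: avoid_prob_def hitting_time_eq_exit_time)
qed

lemma measurable_Pair_count_space:
  fixes f :: "'w \<Rightarrow> 'a::countable" and g :: "'w \<Rightarrow> 'b::countable"
  assumes "f \<in> measurable M (count_space UNIV)" and "g \<in> measurable M (count_space UNIV)"
  shows "(\<lambda>\<omega>. (f \<omega>, g \<omega>)) \<in> measurable M (count_space UNIV)"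
  using measurable_Pair[OF assms] by (simp add: pair_measure_countable)

lemma ctmc_meeting_time_prob_lim:
  assumes st: "stochastic_matrix P" and sym: "\<And>x y. P x y = P y x" and tr: "transitive_chain P"
    and Y: "ctmc N Y lamY P y0" and Z: "ctmc N Z lamZ P z0"
    and ind: "prob_space.indep_var N path_space Y path_space Z" and t: "0 \<le> t"
  shows "(\<lambda>k. lim (\<lambda>m. 1 - avoid_prob (heat P ((lamY + lamZ) * ((t + 1 / real (Suc k)) / 2 ^ m))) (2 ^ m - 1) y0 z0))
       \<longlonglongrightarrow> measure N {\<omega>\<in>space N. meeting_time Y Z \<omega> \<le> ereal t}"
proof -
  have "(\<lambda>k. lim (\<lambda>m. 1 - stay_prob
          (kernel_prod (heat P (lamY * ((t + 1 / real (Suc k)) / 2 ^ m))) (heat P (lamZ * ((t + 1 / real (Suc k)) / 2 ^ m))))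
          {p. fst p \<noteq> snd p} (2 ^ m - 1) (y0, z0)))
      \<longlonglongrightarrow> measure N {\<omega>\<in>space N. exit_time (\<lambda>\<omega> t. (Y \<omega> t, Z \<omega> t)) {p. fst p \<noteq> snd p} \<omega> \<le> ereal t}"
  proof (rule measure_exit_time_le_stay_prob_lim[where c = t and \<alpha> = 1, OF _ _ _ t zero_less_one])
    show "prob_space N" using Y unfolding ctmc_def by blast
    show "(\<lambda>\<omega>. (Y \<omega> s, Z \<omega> s)) \<in> measurable N (count_space UNIV)" for s
      using Y Z unfolding ctmc_def by (intro measurable_Pair_count_space) blast+
    show "\<forall>\<omega>\<in>space N. \<forall>s\<ge>0. eventually (\<lambda>r. (Y \<omega> r, Z \<omega> r) = (Y \<omega> s, Z \<omega> s)) (at_right s)"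
    proof (intro ballI allI impI)
      fix \<omega> and s :: real assume "\<omega> \<in> space N" "0 \<le> s"
      then have "eventually (\<lambda>r. Y \<omega> r = Y \<omega> s) (at_right s)" "eventually (\<lambda>r. Z \<omega> r = Z \<omega> s) (at_right s)"
        using Y Z unfolding ctmc_def by blast+
      then show "eventually (\<lambda>r. (Y \<omega> r, Z \<omega> r) = (Y \<omega> s, Z \<omega> s)) (at_right s)"
        by eventually_elim simp
    qed
    show "measure N {\<omega>\<in>space N. \<forall>i\<le>n. (Y \<omega> (real i * h), Z \<omega> (real i * h)) = s i}
        = (if s 0 = (y0, z0) then 1 else 0) *
          (\<Prod>i<n. kernel_prod (heat P (lamY * h)) (heat P (lamZ * h)) (s i) (s (Suc i)))"
      if "0 \<le> h" for h n s
      using Y ind ctmc_grid_fidi[OF Y that] ctmc_grid_fidi[OF Z that] unfolding ctmc_def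
      by (intro measure_indep_pair_path) auto
  qed
  then show ?thesis
    by (simp only: stay_prob_off_diagonal_heat[OF st sym tr] meeting_time_eq_exit_time
        distrib_right[symmetric])
qed

theorem lemma3p5:
  fixes P :: "'a::finite \<Rightarrow> 'a \<Rightarrow> real"
    and lamY lamZ t :: real and x z :: 'a
    and M :: "'w measure" and X :: "'w \<Rightarrow> real \<Rightarrow> 'a"
    and N :: "'v measure" and Y Z :: "'v \<Rightarrow> real \<Rightarrow> 'a"
  assumes "stochastic_matrix P" and "irreducible_chain P"
    and "reversible_chain P" and "transitive_chain P"
    and "lamY \<ge> 0" and "lamZ \<ge> 0"
    and "ctmc M X 1 P x"
    and "ctmc N Y lamY P x" and "ctmc N Z lamZ P z"
    and "prob_space.indep_var N path_space Y path_space Z"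
    and "t \<ge> 0"
  shows "measure M {\<omega>\<in>space M. hitting_time X z \<omega> \<le> ereal ((lamY + lamZ) * t)}
       = measure N {\<omega>\<in>space N. meeting_time Y Z \<omega> \<le> ereal t}"
proof -
  let ?G = "\<lambda>k. lim (\<lambda>m. 1 - avoid_prob (heat P ((lamY + lamZ) * ((t + 1 / real (Suc k)) / 2 ^ m)))
                               (2 ^ m - 1) x z)"
  have sym: "\<And>a b. P a b = P b a"
    using transitive_reversible_chain_symmetric[OF assms(1-4)] .
  have "?G \<longlonglongrightarrow> measure M {\<omega>\<in>space M. hitting_time X z \<omega> \<le> ereal ((lamY + lamZ) * t)}"
    using assms(5,6,11) by (intro ctmc_hitting_time_prob_lim[OF assms(7)]) simp_all
  moreover have "?G \<longlonglongrightarrow> measure N {\<omega>\<in>space N. meeting_time Y Z \<omega> \<le> ereal t}"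
    by (rule ctmc_meeting_time_prob_lim[OF assms(1) sym assms(4,8-11)])
  ultimately show ?thesis by (rule LIMSEQ_unique)
qed

end
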